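(* Let $\gamma>0$ or $\gamma<-1$, let $\theta\in\mathbb R^d$, and let $\mathcal X\subseteq\mathbb R^d$. For $x\in\mathcal X$, $y\in\{0,1\}$ define $$S_\gamma(x,y,\theta)=\Big[\frac{\exp\{(\gamma+1)y\,\theta^\top x\}}{1+\exp\{(\gamma+1)\theta^\top x\}}\Big]^{\frac{\gamma}{\gamma+1}}\Big\{y-\frac{\exp\{(\gamma+1)\theta^\top x\}}{1+\exp\{(\gamma+1)\theta^\top x\}}\Big\}x.$$ Let $Q$ be an arbitrary conditional distribution of $Y\in\{0,1\}$ given $X=x$, with conditional probability mass function $q(y|x)$ (not necessarily belonging to the logistic model). Then $$\sup_{x\in\mathcal X}\big|\theta^\top\,\mathbb E_Q[S_\gamma(X,Y,\theta)\mid X=x]\big|<\infty .$$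
   Context: $S_\gamma$ is the $\gamma$-estimating score for the binary logistic model $p(y|x,\theta)=\exp(y\theta^\top x)/(1+\exp(\theta^\top x))$, $y\in\{0,1\}$. $\mathbb E_Q[\cdot\mid X=x]=\sum_{y\in\{0,1\}}(\cdot)\,q(y|x)$. *)

theory Defs
  imports "HOL-Analysis.Analysis"
begin

definition S_gamma :: "real \<Rightarrow> real^'n \<Rightarrow> real \<Rightarrow> real^'n \<Rightarrow> real^'n" where
  "S_gamma \<gamma> x y \<theta> =
     ((exp ((\<gamma> + 1) * y * (\<theta> \<bullet> x)) / (1 + exp ((\<gamma> + 1) * (\<theta> \<bullet> x)))) powr (\<gamma> / (\<gamma> + 1)))
     *\<^sub>R ((y - exp ((\<gamma> + 1) * (\<theta> \<bullet> x)) / (1 + exp ((\<gamma> + 1) * (\<theta> \<bullet> x)))) *\<^sub>R x)"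

definition cond_exp_Q :: "(real^'n \<Rightarrow> real \<Rightarrow> real) \<Rightarrow> real \<Rightarrow> real^'n \<Rightarrow> real^'n \<Rightarrow> real^'n" where
  "cond_exp_Q q \<gamma> \<theta> x = (\<Sum>y\<in>{0::real, 1}. q x y *\<^sub>R S_gamma \<gamma> x y \<theta>)"

end

theory Submission
  imports Defs
begin

text \<open>Write \<open>\<sigma>\<close> for the logistic function, \<open>s = (\<gamma> + 1) \<theta> \<bullet> x\<close> and \<open>\<alpha> = \<gamma> / (\<gamma> + 1)\<close>,
  which is positive exactly when \<open>\<gamma> > 0\<close> or \<open>\<gamma> < -1\<close>. Up to the factor \<open>1 / (\<gamma> + 1)\<close>,
  \<open>\<theta> \<bullet> S_gamma \<gamma> x y \<theta>\<close> is \<open>r \<sigma>(r) \<sigma>(-r) powr \<alpha>\<close> with \<open>r = s\<close> for \<open>y = 0\<close> and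
  \<open>r = -s\<close> for \<open>y = 1\<close>. This is bounded on the real line: for \<open>r \<ge> 0\<close> the factor
  \<open>\<sigma>(-r) powr \<alpha> \<le> exp (-\<alpha> r)\<close> kills the linear growth, for \<open>r < 0\<close> the factor
  \<open>\<sigma>(r) \<le> exp r\<close> does. The conditional expectation is a convex combination of the
  two values, so it inherits the bound uniformly in \<open>x\<close>.\<close>

definition logistic :: "real \<Rightarrow> real" where
  "logistic s = exp s / (1 + exp s)"

lemma logistic_pos: "logistic s > 0"
  by (simp add: logistic_def add_pos_pos)

lemma logistic_le_1: "logistic s \<le> 1"
  by (simp add: logistic_def divide_le_eq add_pos_pos)

lemma logistic_le_exp: "logistic s \<le> exp s"
  by (simp add: logistic_def divide_le_eq add_pos_pos)

lemma logistic_minus: "logistic (-s) = 1 / (1 + exp s)"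
  by (simp add: logistic_def exp_minus field_simps add_pos_pos)

lemma one_minus_logistic: "1 - logistic s = logistic (-s)"
proof -
  have "1 + exp s > 0"
    by (simp add: add_pos_pos)
  then show ?thesis
    unfolding logistic_minus unfolding logistic_def by (simp add: field_simps)
qed

lemma mult_exp_minus_le_1: "(x::real) * exp (-x) \<le> 1"
proof -
  have "x \<le> exp x"
    using exp_ge_add_one_self[of x] by linarith
  then show ?thesis
    by (simp add: exp_minus field_simps)
qed

lemma abs_mult_logistic_powr_le:
  assumes "\<alpha> > 0"
  shows "\<bar>s\<bar> * logistic s * logistic (-s) powr \<alpha> \<le> max 1 (1 / \<alpha>)"
proof (cases "s \<ge> 0")
  case True
  have "logistic (-s) powr \<alpha> \<le> exp (-s) powr \<alpha>"
    using assms logistic_pos[of "-s"] logistic_le_exp[of "-s"] by (intro powr_mono2) auto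
  also have "\<dots> = exp (- (\<alpha> * s))"
    by (simp add: powr_def)
  finally have "\<bar>s\<bar> * logistic s * logistic (-s) powr \<alpha> \<le> s * 1 * exp (- (\<alpha> * s))"
    using True logistic_pos[of s] logistic_le_1[of s] by (intro mult_mono) auto
  also have "\<dots> = (\<alpha> * s) * exp (- (\<alpha> * s)) / \<alpha>"
    using assms by simp
  also have "\<dots> \<le> 1 / \<alpha>"
    using assms mult_exp_minus_le_1[of "\<alpha> * s"] by (intro divide_right_mono) auto
  finally show ?thesis
    by linarith
next
  case False
  have "logistic (-s) powr \<alpha> \<le> 1"
    using assms logistic_pos[of "-s"] logistic_le_1[of "-s"] by (intro powr_le1) auto
  then have "\<bar>s\<bar> * logistic s * logistic (-s) powr \<alpha> \<le> (-s) * exp s * 1"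
    using False logistic_pos[of s] logistic_le_exp[of s] by (intro mult_mono) (auto intro: mult_nonpos_nonneg)
  also have "\<dots> \<le> 1"
    using mult_exp_minus_le_1[of "-s"] by simp
  finally show ?thesis
    by linarith
qed

lemma inner_S_gamma_0:
  fixes \<theta> x :: "real^'n"
  assumes "\<gamma> + 1 \<noteq> 0"
  defines "s \<equiv> (\<gamma> + 1) * (\<theta> \<bullet> x)"
  shows "\<theta> \<bullet> S_gamma \<gamma> x 0 \<theta> = - (s * logistic s * logistic (-s) powr (\<gamma> / (\<gamma> + 1))) / (\<gamma> + 1)"
  using assms by (simp add: S_gamma_def logistic_minus logistic_def[symmetric] inner_scaleR_right)

lemma inner_S_gamma_1:
  fixes \<theta> x :: "real^'n"
  assumes "\<gamma> + 1 \<noteq> 0"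
  defines "s \<equiv> (\<gamma> + 1) * (\<theta> \<bullet> x)"
  shows "\<theta> \<bullet> S_gamma \<gamma> x 1 \<theta> = - ((-s) * logistic (-s) * logistic s powr (\<gamma> / (\<gamma> + 1))) / (\<gamma> + 1)"
  using assms by (simp add: S_gamma_def logistic_def[symmetric] one_minus_logistic inner_scaleR_right)

lemma abs_inner_S_gamma_le:
  assumes "\<gamma> > 0 \<or> \<gamma> < -1" and "y \<in> {0, 1}"
  shows "\<bar>\<theta> \<bullet> S_gamma \<gamma> x y \<theta>\<bar> \<le> max 1 ((\<gamma> + 1) / \<gamma>) / \<bar>\<gamma> + 1\<bar>"
proof -
  define \<alpha> where "\<alpha> = \<gamma> / (\<gamma> + 1)"
  define s where "s = (\<gamma> + 1) * (\<theta> \<bullet> x)"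
  define r where "r = (if y = 0 then s else -s)"
  have "\<gamma> + 1 \<noteq> 0" and "\<alpha> > 0"
    using assms(1) by (auto simp: \<alpha>_def divide_pos_pos divide_neg_neg)
  then have "\<theta> \<bullet> S_gamma \<gamma> x y \<theta> = - (r * logistic r * logistic (-r) powr \<alpha>) / (\<gamma> + 1)"
    using assms(2) by (auto simp: inner_S_gamma_0 inner_S_gamma_1 r_def s_def \<alpha>_def)
  then have "\<bar>\<theta> \<bullet> S_gamma \<gamma> x y \<theta>\<bar> = \<bar>r\<bar> * logistic r * logistic (-r) powr \<alpha> / \<bar>\<gamma> + 1\<bar>"
    using logistic_pos[of r] by (simp add: abs_mult)
  also have "\<dots> \<le> max 1 (1 / \<alpha>) / \<bar>\<gamma> + 1\<bar>"
    using abs_mult_logistic_powr_le[OF \<open>\<alpha> > 0\<close>] by (simp add: divide_right_mono)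
  finally show ?thesis
    by (simp add: \<alpha>_def)
qed

lemma abs_inner_cond_exp_Q_le:
  assumes "q x 0 \<ge> 0" "q x 1 \<ge> 0" "q x 0 + q x 1 = 1"
    and "\<And>y. y \<in> {0, 1} \<Longrightarrow> \<bar>\<theta> \<bullet> S_gamma \<gamma> x y \<theta>\<bar> \<le> C"
  shows "\<bar>\<theta> \<bullet> cond_exp_Q q \<gamma> \<theta> x\<bar> \<le> C"
proof -
  have "\<bar>\<theta> \<bullet> cond_exp_Q q \<gamma> \<theta> x\<bar>
      = \<bar>q x 0 * (\<theta> \<bullet> S_gamma \<gamma> x 0 \<theta>) + q x 1 * (\<theta> \<bullet> S_gamma \<gamma> x 1 \<theta>)\<bar>"
    by (simp add: cond_exp_Q_def inner_add_right inner_scaleR_right)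
  also have "\<dots> \<le> q x 0 * \<bar>\<theta> \<bullet> S_gamma \<gamma> x 0 \<theta>\<bar> + q x 1 * \<bar>\<theta> \<bullet> S_gamma \<gamma> x 1 \<theta>\<bar>"
    using assms(1,2) by (metis abs_mult abs_of_nonneg abs_triangle_ineq)
  also have "\<dots> \<le> q x 0 * C + q x 1 * C"
    using assms by (intro add_mono mult_left_mono) auto
  also have "\<dots> = C"
    using assms(3) by (metis distrib_right mult_1)
  finally show ?thesis .
qed

theorem mainTheorem7:
  fixes \<gamma> :: real and \<theta> :: "real^'n" and \<X> :: "(real^'n) set"
    and q :: "real^'n \<Rightarrow> real \<Rightarrow> real"
  assumes "\<gamma> > 0 \<or> \<gamma> < -1"
    and "\<And>x y. x \<in> \<X> \<Longrightarrow> y \<in> {0, 1} \<Longrightarrow> q x y \<ge> 0"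
    and "\<And>x. x \<in> \<X> \<Longrightarrow> q x 0 + q x 1 = 1"
  shows "bdd_above ((\<lambda>x. \<bar>\<theta> \<bullet> cond_exp_Q q \<gamma> \<theta> x\<bar>) ` \<X>)"
proof (rule bdd_aboveI2)
  fix x assume "x \<in> \<X>"
  then show "\<bar>\<theta> \<bullet> cond_exp_Q q \<gamma> \<theta> x\<bar> \<le> max 1 ((\<gamma> + 1) / \<gamma>) / \<bar>\<gamma> + 1\<bar>"
    using assms by (intro abs_inner_cond_exp_Q_le abs_inner_S_gamma_le) auto
qed

end
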